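(* For every finite multiset $\Gamma$ of IMLL formulas and formula $\varphi$: if $\Gamma\Vdash\varphi$, then $\Gamma\vdash\varphi$ (derivable in NIMLL).
   Context: Fix a countably infinite set $\mathbb{A}$ of atoms. IMLL formulas: $\varphi::= p\in\mathbb{A}\mid\varphi\otimes\varphi\mid \mathrm{I}\mid\varphi\multimap\varphi$. Collections are finite multisets; "$,$" denotes multiset union, $\emptyset$ the empty multiset. NIMLL is the sequent-style natural deduction system with rules: (ax) $\varphi\triangleright\varphi$; ($\multimap$I) from $\Gamma,\varphi\triangleright\psi$ infer $\Gamma\triangleright\varphi\multimap\psi$; ($\multimap$E) from $\Gamma\triangleright\varphi\multimap\psi$ and $\Delta\triangleright\varphi$ infer $\Gamma,\Delta\triangleright\psi$; ($\mathrm{I}$I) $\emptyset\triangleright\mathrm{I}$; ($\mathrm{I}$E) from $\Gamma\triangleright\varphi$ and $\Delta\triangleright\mathrm{I}$ infer $\Gamma,\Delta\triangleright\varphi$; ($\otimes$I) from $\Gamma\triangleright\varphi$ and $\Delta\triangleright\psi$ infer $\Gamma,\Delta\triangleright\varphi\otimes\psi$; ($\otimes$E) from $\Gamma\triangleright\varphi\otimes\psi$ and $\Delta,\varphi,\psi\triangleright\chi$ infer $\Gamma,\Delta\triangleright\chi$. $\Gamma\vdash\varphi$ means $\Gamma\triangleright\varphi$ is derivable. An atomic rule is $(P_1\triangleright p_1,\dots,P_n\triangleright p_n)\Rightarrow p$ ($n\ge0$, $P_i$ finite multisets of atoms); a base is a set of atomic rules. Derivability $\vdash_{\mathscr{B}}$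 is the least relation with (Ref) $[p]\vdash_{\mathscr{B}}p$; (App) if $(P_1\triangleright p_1,\dots,P_n\triangleright p_n)\Rightarrow p\in\mathscr{B}$ and $S_i,P_i\vdash_{\mathscr{B}}p_i$ for all $i$, then $S_1,\dots,S_n\vdash_{\mathscr{B}}p$. Support: (At) $\Vdash^{P}_{\mathscr{B}}p$ iff $P\vdash_{\mathscr{B}}p$; ($\otimes$) $\Vdash^{P}_{\mathscr{B}}\varphi\otimes\psi$ iff for every $\mathscr{X}\supseteq\mathscr{B}$, multiset of atoms $U$, atom $p$, if $\varphi,\psi\Vdash^{U}_{\mathscr{X}}p$ then $\Vdash^{P,U}_{\mathscr{X}}p$; ($\mathrm{I}$) $\Vdash^{P}_{\mathscr{B}}\mathrm{I}$ iff for every $\mathscr{X}\supseteq\mathscr{B}$, $U$, $p$, if $\Vdash^{U}_{\mathscr{X}}p$ then $\Vdash^{P,U}_{\mathscr{X}}p$; ($\multimap$) $\Vdash^{P}_{\mathscr{B}}\varphi\multimap\psi$ iff $\varphi\Vdash^{P}_{\mathscr{B}}\psi$; (comma) for nonempty $\Gamma,\Delta$, $\Vdash^{P}_{\mathscr{B}}\Gamma,\Delta$ iff $P=U,V$ for some $U,V$ with $\Vdash^{U}_{\mathscr{B}}\Gamma$, $\Vdash^{V}_{\mathscr{B}}\Delta$ (singleton $[\varphi]$ supported iff $\varphi$ is); (Inf) for nonempty $\Gamma$, $\Gamma\Vdash^{P}_{\mathscr{B}}\varphi$ iff for every $\mathscr{X}\supseteq\mathscr{B}$ and $U$, if $\Vdash^{U}_{\mathscr{X}}\Gamma$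 then $\Vdash^{P,U}_{\mathscr{X}}\varphi$; for empty $\Gamma$ it means $\Vdash^{P}_{\mathscr{B}}\varphi$. Validity: $\Gamma\Vdash\varphi$ iff $\Gamma\Vdash^{\emptyset}_{\mathscr{B}}\varphi$ for every base $\mathscr{B}$. *)

theory Defs
  imports Main "HOL-Library.Multiset"
begin

type_synonym atom = nat

datatype formula =
    Atom atom
  | Tensor formula formula
  | One
  | Lolli formula formula

inductive nimll :: "formula multiset \<Rightarrow> formula \<Rightarrow> bool" where
  ax: "nimll {#\<phi>#} \<phi>"
| lolliI: "nimll (\<Gamma> + {#\<phi>#}) \<psi> \<Longrightarrow> nimll \<Gamma> (Lolli \<phi> \<psi>)"
| lolliE: "nimll \<Gamma> (Lolli \<phi> \<psi>) \<Longrightarrow> nimll \<Delta> \<phi> \<Longrightarrow> nimll (\<Gamma> + \<Delta>) \<psi>"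
| oneI: "nimll {#} One"
| oneE: "nimll \<Gamma> \<phi> \<Longrightarrow> nimll \<Delta> One \<Longrightarrow> nimll (\<Gamma> + \<Delta>) \<phi>"
| tensorI: "nimll \<Gamma> \<phi> \<Longrightarrow> nimll \<Delta> \<psi> \<Longrightarrow> nimll (\<Gamma> + \<Delta>) (Tensor \<phi> \<psi>)"
| tensorE: "nimll \<Gamma> (Tensor \<phi> \<psi>) \<Longrightarrow> nimll (\<Delta> + {#\<phi>, \<psi>#}) \<chi>
            \<Longrightarrow> nimll (\<Gamma> + \<Delta>) \<chi>"

text \<open>An atomic rule (P1|>p1,...,Pn|>pn) => p: list of premises and a conclusion.\<close>
type_synonym atomic_rule = "(atom multiset \<times> atom) list \<times> atom"
type_synonym base = "atomic_rule set"

inductive derivable_base :: "base \<Rightarrow> atom multiset \<Rightarrow> atom \<Rightarrow> bool" for B :: base where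
  Ref: "derivable_base B {#p#} p"
| App: "(prems, p) \<in> B \<Longrightarrow> length Ss = length prems \<Longrightarrow>
        (\<forall>i < length prems. derivable_base B (Ss ! i + fst (prems ! i)) (snd (prems ! i)))
        \<Longrightarrow> derivable_base B (sum_list Ss) p"

text \<open>Support of a formula at base B with atomic resources P.
  The inference clause with the nonempty context [phi, psi] and atomic conclusion p
  (used in the tensor clause) is unfolded: support of the multiset [phi,psi] by V means
  V splits as V1 + V2 supporting phi and psi respectively.\<close>
fun supp :: "base \<Rightarrow> atom multiset \<Rightarrow> formula \<Rightarrow> bool" where
  "supp B P (Atom p) = derivable_base B P p"
| "supp B P (Tensor \<phi> \<psi>) =
     (\<forall>X U p. B \<subseteq> X \<longrightarrow>
        (\<forall>Y V. X \<subseteq> Y \<longrightarrow>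
            (\<exists>V1 V2. V = V1 + V2 \<and> supp Y V1 \<phi> \<and> supp Y V2 \<psi>) \<longrightarrow>
            derivable_base Y (U + V) p)
        \<longrightarrow> derivable_base X (P + U) p)"
| "supp B P One =
     (\<forall>X U p. B \<subseteq> X \<longrightarrow> derivable_base X U p \<longrightarrow> derivable_base X (P + U) p)"
| "supp B P (Lolli \<phi> \<psi>) =
     (\<forall>X U. B \<subseteq> X \<longrightarrow> supp X U \<phi> \<longrightarrow> supp X (P + U) \<psi>)"

inductive supp_ctx :: "base \<Rightarrow> atom multiset \<Rightarrow> formula multiset \<Rightarrow> bool" where
  single: "supp B P \<phi> \<Longrightarrow> supp_ctx B P {#\<phi>#}"
| comma: "\<Gamma> \<noteq> {#} \<Longrightarrow> \<Delta> \<noteq> {#} \<Longrightarrow> supp_ctx B U \<Gamma> \<Longrightarrow> supp_ctx B V \<Delta>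
          \<Longrightarrow> supp_ctx B (U + V) (\<Gamma> + \<Delta>)"

definition supp_inf :: "formula multiset \<Rightarrow> base \<Rightarrow> atom multiset \<Rightarrow> formula \<Rightarrow> bool" where
  "supp_inf \<Gamma> B P \<phi> =
     (if \<Gamma> = {#} then supp B P \<phi>
      else (\<forall>X U. B \<subseteq> X \<longrightarrow> supp_ctx X U \<Gamma> \<longrightarrow> supp X (P + U) \<phi>))"

definition valid :: "formula multiset \<Rightarrow> formula \<Rightarrow> bool" where
  "valid \<Gamma> \<phi> = (\<forall>B. supp_inf \<Gamma> B {#} \<phi>)"

end

theory Submission
  imports Defs "HOL-Library.Infinite_Set"
begin

text \<open>Completeness by a simulation base. Fix the finite, subformula-closed set \<open>S\<close> of
  subformulas of \<open>\<Gamma>\<close> and \<open>\<phi>\<close>, and name every member of \<open>S\<close> by an atom: atoms name themselves,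
  all other formulas get distinct fresh atoms. The simulation base turns the introduction and
  elimination rules of each connective into atomic rules on these names. In every extension
  of this base, supporting a formula of \<open>S\<close> amounts to deriving its name (induction on the
  formula), so validity of \<open>\<Gamma> \<Vdash> \<phi>\<close> yields an atomic derivation of the name of \<open>\<phi>\<close> from the
  names of \<open>\<Gamma>\<close> in the simulation base. Reading the names back as formulas, each atomic rule
  becomes the NIMLL rule it was made from.\<close>

fun subformulas :: "formula \<Rightarrow> formula set" where
  "subformulas (Atom p) = {Atom p}"
| "subformulas (Tensor a b) = insert (Tensor a b) (subformulas a \<union> subformulas b)"
| "subformulas One = {One}"
| "subformulas (Lolli a b) = insert (Lolli a b) (subformulas a \<union> subformulas b)"

lemma finite_subformulas: "finite (subformulas x)"
  by (induction x) auto

lemma subformulas_refl: "x \<in> subformulas x"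
  by (cases x) auto

lemma subformulas_trans: "y \<in> subformulas x \<Longrightarrow> subformulas y \<subseteq> subformulas x"
  by (induction x) (auto simp: subformulas_refl)

definition subformula_closed :: "formula set \<Rightarrow> bool" where
  "subformula_closed S \<longleftrightarrow> (\<forall>x\<in>S. subformulas x \<subseteq> S)"

lemma subformula_closed_UN_subformulas: "subformula_closed (\<Union>x\<in>A. subformulas x)"
  unfolding subformula_closed_def by (blast dest: subformulas_trans)

lemma subformula_closedD:
  assumes "subformula_closed S"
  shows "Lolli a b \<in> S \<Longrightarrow> a \<in> S \<and> b \<in> S" and "Tensor a b \<in> S \<Longrightarrow> a \<in> S \<and> b \<in> S"
  using assms subformulas_refl unfolding subformula_closed_def by fastforce+

lemma derivable_base_mono: "derivable_base B P p \<Longrightarrow> B \<subseteq> B' \<Longrightarrow> derivable_base B' P p"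
proof (induction rule: derivable_base.induct)
  case (Ref p)
  show ?case by (rule derivable_base.Ref)
next
  case (App prems p Ss)
  then show ?case by (intro derivable_base.App) auto
qed

lemma derivable_base_App0: "([], p) \<in> B \<Longrightarrow> derivable_base B {#} p"
  using derivable_base.App[of "[]" p B "[]"] by simp

lemma derivable_base_App1:
  "([(P1, p1)], p) \<in> B \<Longrightarrow> derivable_base B (S1 + P1) p1 \<Longrightarrow> derivable_base B S1 p"
  using derivable_base.App[of "[(P1, p1)]" p B "[S1]"] by simp

lemma derivable_base_App2:
  assumes "([(P1, p1), (P2, p2)], p) \<in> B"
    and "derivable_base B (S1 + P1) p1" and "derivable_base B (S2 + P2) p2"
  shows "derivable_base B (S1 + S2) p"
  using derivable_base.App[OF assms(1), of "[S1, S2]"] assms(2,3) by (simp add: less_Suc_eq)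

inductive_set simulation_base :: "formula set \<Rightarrow> (formula \<Rightarrow> atom) \<Rightarrow> base"
  for S :: "formula set" and f :: "formula \<Rightarrow> atom" where
  lolli_intro: "Lolli a b \<in> S \<Longrightarrow> ([({#f a#}, f b)], f (Lolli a b)) \<in> simulation_base S f"
| lolli_elim: "Lolli a b \<in> S \<Longrightarrow> ([({#}, f (Lolli a b)), ({#}, f a)], f b) \<in> simulation_base S f"
| tensor_intro: "Tensor a b \<in> S \<Longrightarrow> ([({#}, f a), ({#}, f b)], f (Tensor a b)) \<in> simulation_base S f"
| tensor_elim:
    "Tensor a b \<in> S \<Longrightarrow> ([({#}, f (Tensor a b)), ({#f a, f b#}, p)], p) \<in> simulation_base S f"
| one_intro: "One \<in> S \<Longrightarrow> ([], f One) \<in> simulation_base S f"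
| one_elim: "One \<in> S \<Longrightarrow> ([({#}, p), ({#}, f One)], p) \<in> simulation_base S f"

definition represents :: "base \<Rightarrow> (formula \<Rightarrow> atom) \<Rightarrow> formula \<Rightarrow> bool" where
  "represents B f x \<longleftrightarrow> (\<forall>X U. B \<subseteq> X \<longrightarrow> supp X U x = derivable_base X U (f x))"

lemma representsD:
  "represents B f x \<Longrightarrow> B \<subseteq> X \<Longrightarrow> supp X U x \<longleftrightarrow> derivable_base X U (f x)"
  unfolding represents_def by blast

lemma derivable_base_of_supp_Tensor:
  assumes H: "supp X U (Tensor a b)"
    and "\<And>Y V1 V2. X \<subseteq> Y \<Longrightarrow> supp Y V1 a \<Longrightarrow> supp Y V2 b \<Longrightarrow> derivable_base Y (V1 + V2) p"
  shows "derivable_base X U p"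
proof -
  have "\<forall>Y V. X \<subseteq> Y \<longrightarrow> (\<exists>V1 V2. V = V1 + V2 \<and> supp Y V1 a \<and> supp Y V2 b)
      \<longrightarrow> derivable_base Y ({#} + V) p"
    using assms(2) by auto
  then have "derivable_base X (U + {#}) p"
    by (rule H[unfolded supp.simps, THEN spec, THEN spec, THEN spec, THEN mp, OF order_refl, THEN mp])
  then show ?thesis by simp
qed

lemma represents_Tensor:
  assumes T: "Tensor a b \<in> S" and a: "represents (simulation_base S f) f a"
    and b: "represents (simulation_base S f) f b"
  shows "represents (simulation_base S f) f (Tensor a b)"
  unfolding represents_def
proof (intro allI impI iffI)
  fix X U
  assume X: "simulation_base S f \<subseteq> X" and H: "supp X U (Tensor a b)"
  from H show "derivable_base X U (f (Tensor a b))"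
  proof (rule derivable_base_of_supp_Tensor)
    fix Y V1 V2
    assume "X \<subseteq> Y" "supp Y V1 a" "supp Y V2 b"
    moreover have Y: "simulation_base S f \<subseteq> Y" using X \<open>X \<subseteq> Y\<close> by blast
    ultimately have "derivable_base Y V1 (f a)" "derivable_base Y V2 (f b)"
      using representsD[OF a] representsD[OF b] by blast+
    then show "derivable_base Y (V1 + V2) (f (Tensor a b))"
      using derivable_base_App2[OF subsetD[OF Y simulation_base.tensor_intro[OF T]]] by simp
  qed
next
  fix X U
  assume X: "simulation_base S f \<subseteq> X" and D: "derivable_base X U (f (Tensor a b))"
  show "supp X U (Tensor a b)"
    unfolding supp.simps
  proof (intro allI impI)
    fix Y W p
    assume "X \<subseteq> Y" and H: "\<forall>Z V. Y \<subseteq> Z \<longrightarrow>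
        (\<exists>V1 V2. V = V1 + V2 \<and> supp Z V1 a \<and> supp Z V2 b) \<longrightarrow> derivable_base Z (W + V) p"
    have Y: "simulation_base S f \<subseteq> Y" using X \<open>X \<subseteq> Y\<close> by blast
    have "supp Y {#f a#} a" "supp Y {#f b#} b"
      using representsD[OF a Y] representsD[OF b Y] derivable_base.Ref by blast+
    then have "derivable_base Y (W + ({#f a#} + {#f b#})) p"
      using H by blast
    moreover have "derivable_base Y (U + {#}) (f (Tensor a b))"
      using derivable_base_mono[OF D \<open>X \<subseteq> Y\<close>] by simp
    ultimately show "derivable_base Y (U + W) p"
      using derivable_base_App2[OF subsetD[OF Y simulation_base.tensor_elim[OF T]]]
      by (simp add: add_mset_commute)
  qed
qed

lemma represents_One:
  assumes O: "One \<in> S"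
  shows "represents (simulation_base S f) f One"
  unfolding represents_def
proof (intro allI impI iffI)
  fix X U
  assume X: "simulation_base S f \<subseteq> X" and H: "supp X U One"
  have "derivable_base X {#} (f One)"
    using derivable_base_App0 subsetD[OF X simulation_base.one_intro[OF O]] by blast
  then have "derivable_base X (U + {#}) (f One)"
    using H unfolding supp.simps by blast
  then show "derivable_base X U (f One)" by simp
next
  fix X U
  assume X: "simulation_base S f \<subseteq> X" and D: "derivable_base X U (f One)"
  show "supp X U One"
    unfolding supp.simps
  proof (intro allI impI)
    fix Y W p
    assume "X \<subseteq> Y" and W: "derivable_base Y W p"
    have "([({#}, p), ({#}, f One)], p) \<in> Y"
      using X \<open>X \<subseteq> Y\<close> simulation_base.one_elim[OF O] by blast
    moreover have "derivable_base Y (U + {#}) (f One)"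
      using derivable_base_mono[OF D \<open>X \<subseteq> Y\<close>] by simp
    ultimately have "derivable_base Y (W + U) p"
      using derivable_base_App2 W by (metis add_0_right)
    then show "derivable_base Y (U + W) p" by (simp add: add.commute)
  qed
qed

lemma represents_Lolli:
  assumes L: "Lolli a b \<in> S" and a: "represents (simulation_base S f) f a"
    and b: "represents (simulation_base S f) f b"
  shows "represents (simulation_base S f) f (Lolli a b)"
  unfolding represents_def
proof (intro allI impI iffI)
  fix X U
  assume X: "simulation_base S f \<subseteq> X" and H: "supp X U (Lolli a b)"
  have "supp X {#f a#} a" using representsD[OF a X] derivable_base.Ref by blast
  then have "supp X (U + {#f a#}) b" using H unfolding supp.simps by blast
  then have "derivable_base X (U + {#f a#}) (f b)" using representsD[OF b X] by blast
  then show "derivable_base X U (f (Lolli a b))"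
    using derivable_base_App1[OF subsetD[OF X simulation_base.lolli_intro[OF L]]] by blast
next
  fix X U
  assume X: "simulation_base S f \<subseteq> X" and D: "derivable_base X U (f (Lolli a b))"
  show "supp X U (Lolli a b)"
    unfolding supp.simps
  proof (intro allI impI)
    fix Y V
    assume "X \<subseteq> Y" and "supp Y V a"
    have Y: "simulation_base S f \<subseteq> Y" using X \<open>X \<subseteq> Y\<close> by blast
    have "derivable_base Y V (f a)" using representsD[OF a Y] \<open>supp Y V a\<close> by blast
    moreover have "derivable_base Y (U + {#}) (f (Lolli a b))"
      using derivable_base_mono[OF D \<open>X \<subseteq> Y\<close>] by simp
    ultimately have "derivable_base Y (U + V) (f b)"
      using derivable_base_App2[OF subsetD[OF Y simulation_base.lolli_elim[OF L]]] by simp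
    then show "supp Y (U + V) b" using representsD[OF b Y] by blast
  qed
qed

lemma represents_simulation_base:
  assumes "subformula_closed S" and "\<And>p. Atom p \<in> S \<Longrightarrow> f (Atom p) = p"
  shows "x \<in> S \<Longrightarrow> represents (simulation_base S f) f x"
proof (induction x)
  case (Atom p)
  then show ?case using assms(2) unfolding represents_def by simp
next
  case (Tensor a b)
  then show ?case using represents_Tensor subformula_closedD[OF assms(1)] by blast
next
  case One
  then show ?case by (rule represents_One)
next
  case (Lolli a b)
  then show ?case using represents_Lolli subformula_closedD[OF assms(1)] by blast
qed

lemma supp_ctx_image_mset:
  assumes "\<And>x. x \<in># \<Gamma> \<Longrightarrow> supp B {#f x#} x"
  shows "\<Gamma> \<noteq> {#} \<Longrightarrow> supp_ctx B (image_mset f \<Gamma>) \<Gamma>"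
  using assms
proof (induction \<Gamma>)
  case empty
  then show ?case by simp
next
  case (add x M)
  have x: "supp_ctx B {#f x#} {#x#}" using add.prems by (simp add: supp_ctx.single)
  show ?case
  proof (cases "M = {#}")
    case True
    then show ?thesis using x by simp
  next
    case False
    then have "supp_ctx B (image_mset f M) M" using add by simp
    then show ?thesis using supp_ctx.comma[OF _ False x] by (simp add: add.commute)
  qed
qed

lemma nimll_of_derivable_simulation_base:
  assumes "subformula_closed S" and inv: "\<And>x. x \<in> S \<Longrightarrow> g (f x) = x"
  shows "derivable_base (simulation_base S f) P p \<Longrightarrow> nimll (image_mset g P) (g p)"
proof (induction rule: derivable_base.induct)
  case (Ref p)
  show ?case using nimll.ax by simp
next
  case (App prems p Ss)
  have IH: "nimll (image_mset g (Ss ! i + fst (prems ! i))) (g (snd (prems ! i)))"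
    if "i < length prems" for i
    using App.IH that by blast
  from App.hyps(1) show ?case
  proof cases
    case (lolli_intro a b)
    then have "a \<in> S" "b \<in> S" using subformula_closedD[OF assms(1)] by blast+
    moreover obtain S1 where Ss: "Ss = [S1]"
      using App.hyps(2) lolli_intro by (auto simp: length_Suc_conv)
    ultimately have "nimll (image_mset g S1 + {#a#}) b"
      using IH[of 0] lolli_intro inv by simp
    then show ?thesis using nimll.lolliI Ss lolli_intro inv by simp
  next
    case (lolli_elim a b)
    then have "a \<in> S" "b \<in> S" using subformula_closedD[OF assms(1)] by blast+
    moreover obtain S1 S2 where Ss: "Ss = [S1, S2]"
      using App.hyps(2) lolli_elim by (auto simp: length_Suc_conv)
    ultimately have "nimll (image_mset g S1) (Lolli a b)" "nimll (image_mset g S2) a"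
      using IH[of 0] IH[of 1] lolli_elim inv by simp_all
    then show ?thesis using nimll.lolliE Ss lolli_elim inv \<open>b \<in> S\<close> by simp
  next
    case (tensor_intro a b)
    then have "a \<in> S" "b \<in> S" using subformula_closedD[OF assms(1)] by blast+
    moreover obtain S1 S2 where Ss: "Ss = [S1, S2]"
      using App.hyps(2) tensor_intro by (auto simp: length_Suc_conv)
    ultimately have "nimll (image_mset g S1) a" "nimll (image_mset g S2) b"
      using IH[of 0] IH[of 1] tensor_intro inv by simp_all
    then show ?thesis using nimll.tensorI Ss tensor_intro inv by simp
  next
    case (tensor_elim a b)
    then have "a \<in> S" "b \<in> S" using subformula_closedD[OF assms(1)] by blast+
    moreover obtain S1 S2 where Ss: "Ss = [S1, S2]"
      using App.hyps(2) tensor_elim by (auto simp: length_Suc_conv)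
    ultimately have "nimll (image_mset g S1) (Tensor a b)"
      and "nimll (image_mset g S2 + {#a, b#}) (g p)"
      using IH[of 0] IH[of 1] tensor_elim inv by simp_all
    then show ?thesis using nimll.tensorE Ss by simp
  next
    case one_intro
    then show ?thesis using App.hyps(2) inv nimll.oneI by simp
  next
    case one_elim
    then obtain S1 S2 where Ss: "Ss = [S1, S2]" using App.hyps(2) by (auto simp: length_Suc_conv)
    then have "nimll (image_mset g S1) (g p)" "nimll (image_mset g S2) One"
      using IH[of 0] IH[of 1] one_elim inv by simp_all
    then show ?thesis using nimll.oneE Ss by simp
  qed
qed

lemma obtain_atom_naming:
  assumes "finite S"
  obtains f :: "formula \<Rightarrow> atom" where "inj_on f S" and "\<And>p. Atom p \<in> S \<Longrightarrow> f (Atom p) = p"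
proof -
  obtain e :: "formula \<Rightarrow> nat" where e: "inj_on e S"
    using finite_imp_inj_to_nat_seg[OF assms] by blast
  have "finite (Atom -` S)" using assms by (rule finite_vimageI) (simp add: inj_def)
  then obtain N where "Atom -` S \<subseteq> {..<N}"
    using finite_nat_bounded by blast
  then have N: "\<And>p. Atom p \<in> S \<Longrightarrow> p < N" by blast
  define f where "f x = (case x of Atom p \<Rightarrow> p | _ \<Rightarrow> N + e x)" for x
  have "inj_on f S"
  proof (rule inj_onI)
    fix x y
    assume "x \<in> S" "y \<in> S" "f x = f y"
    then show "x = y"
      unfolding f_def by (cases x; cases y) (auto simp: inj_on_eq_iff[OF e] dest: N)
  qed
  then show ?thesis using that unfolding f_def by simp
qed

theorem theorem4:
  fixes \<Gamma> :: "formula multiset" and \<phi> :: formula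
  assumes "valid \<Gamma> \<phi>"
  shows "nimll \<Gamma> \<phi>"
proof -
  define S where "S = (\<Union>x\<in>insert \<phi> (set_mset \<Gamma>). subformulas x)"
  have closed: "subformula_closed S"
    unfolding S_def by (rule subformula_closed_UN_subformulas)
  have S: "\<phi> \<in> S" "set_mset \<Gamma> \<subseteq> S" unfolding S_def using subformulas_refl by auto
  obtain f where f: "inj_on f S" "\<And>p. Atom p \<in> S \<Longrightarrow> f (Atom p) = p"
    using obtain_atom_naming[of S] finite_subformulas unfolding S_def by blast
  define B where "B = simulation_base S f"
  have rep: "x \<in> S \<Longrightarrow> supp B U x = derivable_base B U (f x)" for x U
    using represents_simulation_base[OF closed f(2)] unfolding B_def represents_def by blast
  have "supp B (image_mset f \<Gamma>) \<phi>"
  proof (cases "\<Gamma> = {#}")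
    case False
    have "supp_ctx B (image_mset f \<Gamma>) \<Gamma>"
      using supp_ctx_image_mset[OF _ False] rep S derivable_base.Ref by blast
    moreover have "supp_inf \<Gamma> B {#} \<phi>" using assms unfolding valid_def by blast
    ultimately show ?thesis using False unfolding supp_inf_def by simp
  qed (use assms in \<open>simp add: valid_def supp_inf_def\<close>)
  then have "derivable_base B (image_mset f \<Gamma>) (f \<phi>)" using rep S by blast
  then have "nimll (image_mset (inv_into S f) (image_mset f \<Gamma>)) (inv_into S f (f \<phi>))"
    using nimll_of_derivable_simulation_base[OF closed, where g = "inv_into S f" and f = f] f(1)
    unfolding B_def by simp
  moreover have "image_mset (inv_into S f) (image_mset f \<Gamma>) = \<Gamma>"
    using S(2) f(1) by (induction \<Gamma>) auto
  ultimately show ?thesis using S(1) f(1) by simp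
qed

end
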